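(* Let $D$ be finite or countably infinite, let $(\rho^0_{kl})_{k,l=1}^D$ be the matrix of a density operator (positive semidefinite, trace one) in some orthonormal basis, and let $(U_{mn})_{m,n=1}^D$ be a unitary matrix. Define $\mu_n=\sum_k|U_{nk}|^2\rho^0_{kk}$, $$\nu_{mn}=\sum_{k\neq l}U_{mk}U_{ml}^*U_{nk}^*U_{nl}|\rho^0_{kl}|^2,\qquad \tilde\nu_{mn}=\sum_{k,l}U_{mk}U_{ml}^*U_{nk}^*U_{nl}|\rho^0_{kl}|^2 .$$ Then for all $m,n$, $\nu_{mn}\le\tilde\nu_{mn}\le\mu_m\mu_n$.
   Context: The quantities $\nu_{mn}$ and $\tilde\nu_{mn}$ are real numbers (each sum is invariant under complex conjugation combined with exchanging $k$ and $l$). *)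

theory Defs
  imports "HOL-Analysis.Analysis"
begin

text \<open>Matrices indexed by a countable type 'a (finite or countably infinite D).\<close>

definition density_matrix :: "('a \<Rightarrow> 'a \<Rightarrow> complex) \<Rightarrow> bool" where
  "density_matrix \<rho> \<longleftrightarrow>
     (\<forall>k l. \<rho> l k = cnj (\<rho> k l)) \<and>
     (\<forall>S x. finite S \<longrightarrow> 0 \<le> Re (\<Sum>k\<in>S. \<Sum>l\<in>S. cnj (x k) * \<rho> k l * x l)) \<and>
     ((\<lambda>k. \<rho> k k) has_sum 1) UNIV"

definition unitary_matrix :: "('a \<Rightarrow> 'a \<Rightarrow> complex) \<Rightarrow> bool" where
  "unitary_matrix U \<longleftrightarrow>
     (\<forall>m n. ((\<lambda>k. U m k * cnj (U n k)) has_sum (if m = n then 1 else 0)) UNIV) \<and>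
     (\<forall>m n. ((\<lambda>k. cnj (U k m) * U k n) has_sum (if m = n then 1 else 0)) UNIV)"

definition mu :: "('a \<Rightarrow> 'a \<Rightarrow> complex) \<Rightarrow> ('a \<Rightarrow> 'a \<Rightarrow> complex) \<Rightarrow> 'a \<Rightarrow> real" where
  "mu U \<rho> n = (\<Sum>\<^sub>\<infinity>k. (cmod (U n k))\<^sup>2 * Re (\<rho> k k))"

definition nu_term :: "('a \<Rightarrow> 'a \<Rightarrow> complex) \<Rightarrow> ('a \<Rightarrow> 'a \<Rightarrow> complex) \<Rightarrow> 'a \<Rightarrow> 'a \<Rightarrow> 'a \<times> 'a \<Rightarrow> complex" where
  "nu_term U \<rho> m n p = (case p of (k, l) \<Rightarrow>
     U m k * cnj (U m l) * cnj (U n k) * U n l * complex_of_real ((cmod (\<rho> k l))\<^sup>2))"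

definition nu :: "('a \<Rightarrow> 'a \<Rightarrow> complex) \<Rightarrow> ('a \<Rightarrow> 'a \<Rightarrow> complex) \<Rightarrow> 'a \<Rightarrow> 'a \<Rightarrow> complex" where
  "nu U \<rho> m n = infsum (nu_term U \<rho> m n) {(k, l). k \<noteq> l}"

definition nu_tilde :: "('a \<Rightarrow> 'a \<Rightarrow> complex) \<Rightarrow> ('a \<Rightarrow> 'a \<Rightarrow> complex) \<Rightarrow> 'a \<Rightarrow> 'a \<Rightarrow> complex" where
  "nu_tilde U \<rho> m n = infsum (nu_term U \<rho> m n) UNIV"

end

theory Submission
  imports Defs
begin

text \<open>Hermiticity of \<open>\<rho>\<close> makes the summand of \<open>\<nu>\<close> conjugate-symmetric under \<open>k \<leftrightarrow> l\<close>,
so both sums are real, and the full sum exceeds \<open>\<nu>\<^sub>m\<^sub>n\<close> by the diagonal terms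
\<open>|U\<^sub>m\<^sub>k|\<^sup>2 |U\<^sub>n\<^sub>k|\<^sup>2 |\<rho>\<^sub>k\<^sub>k|\<^sup>2 \<ge> 0\<close>. The \<open>2 \<times> 2\<close> principal minors of \<open>\<rho>\<close> give
\<open>|\<rho>\<^sub>k\<^sub>l|\<^sup>2 \<le> \<rho>\<^sub>k\<^sub>k \<rho>\<^sub>l\<^sub>l\<close>, and then AM-GM bounds the \<open>(k, l)\<close> summand in norm by
\<open>(p\<^sub>m\<^sub>k p\<^sub>n\<^sub>l + p\<^sub>n\<^sub>k p\<^sub>m\<^sub>l) / 2\<close>, where \<open>p\<^sub>n\<^sub>k = |U\<^sub>n\<^sub>k|\<^sup>2 \<rho>\<^sub>k\<^sub>k\<close> are the summands of \<open>\<mu>\<^sub>n\<close>.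
This majorant sums to \<open>\<mu>\<^sub>m \<mu>\<^sub>n\<close>, which gives absolute summability and the upper bound.\<close>

lemma has_sum_product_nonneg:
  fixes f :: "'a \<Rightarrow> real" and g :: "'b \<Rightarrow> real"
  assumes "\<And>x. 0 \<le> f x" and "\<And>y. 0 \<le> g y"
    and f: "(f has_sum F) A" and g: "(g has_sum G) B"
  shows "((\<lambda>(x, y). f x * g y) has_sum F * G) (A \<times> B)"
proof (rule has_sum_SigmaI)
  show "((\<lambda>y. (\<lambda>(x, y). f x * g y) (x, y)) has_sum f x * G) B" for x
    using has_sum_cmult_right[OF g] by simp
  show "((\<lambda>x. f x * G) has_sum F * G) A"
    using f by (rule has_sum_cmult_left)
  have "(\<lambda>p. norm ((\<lambda>(x, y). f x * g y) p)) summable_on A \<times> B"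
  proof (subst Infinite_Sum.abs_summable_on_Sigma_iff, intro conjI ballI)
    show "(\<lambda>y. norm ((\<lambda>(x, y). f x * g y) (x, y))) summable_on B" for x
      using assms(1,2) has_sum_cmult_right[OF g, of "f x"] by (auto simp: summable_on_def)
    have "(\<Sum>\<^sub>\<infinity>y\<in>B. norm ((\<lambda>(x, y). f x * g y) (x, y))) = f x * G" for x
      using assms(1,2) has_sum_cmult_right[OF g, of "f x"] by (simp add: infsumI)
    moreover have "0 \<le> G" using g assms(2) by (rule has_sum_nonneg)
    ultimately show "(\<lambda>x. norm (\<Sum>\<^sub>\<infinity>y\<in>B. norm ((\<lambda>(x, y). f x * g y) (x, y)))) summable_on A"
      using has_sum_cmult_left[OF f] assms(1) by (auto simp: summable_on_def)
  qed
  then show "(\<lambda>(x, y). f x * g y) summable_on A \<times> B"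
    by (rule abs_summable_summable)
qed

lemma Im_infsum_eq_0_if_swap_cnj:
  fixes f :: "'a \<times> 'a \<Rightarrow> complex"
  assumes f_swap: "\<And>k l. f (l, k) = cnj (f (k, l))"
    and A_swap: "\<And>k l. (k, l) \<in> A \<Longrightarrow> (l, k) \<in> A"
  shows "Im (infsum f A) = 0"
proof -
  have "infsum (f \<circ> prod.swap) A = infsum f A"
    by (rule infsum_reindex_bij_witness[where i = prod.swap and j = prod.swap])
       (auto intro: A_swap)
  moreover have "f \<circ> prod.swap = (\<lambda>p. cnj (f p))"
  proof
    show "(f \<circ> prod.swap) p = cnj (f p)" for p
      by (cases p) (simp only: comp_apply swap_simp, rule f_swap)
  qed
  ultimately have "cnj (infsum f A) = infsum f A" by simp
  then have "Im (cnj (infsum f A)) = Im (infsum f A)" by (rule arg_cong)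
  then show ?thesis by simp
qed

lemma quadratic_nonneg_imp_discriminant_le:
  fixes a b c :: real
  assumes "0 \<le> a" and nonneg: "\<And>s. 0 \<le> a * s\<^sup>2 + b * s + c"
  shows "b\<^sup>2 \<le> 4 * a * c"
proof (cases "a = 0")
  case True
  have "b = 0"
  proof (rule ccontr)
    assume "b \<noteq> 0"
    then have "a * (- (c + 1) / b)\<^sup>2 + b * (- (c + 1) / b) + c = -1" using True by simp
    with nonneg show False by (metis neg_0_le_iff_le not_one_le_zero)
  qed
  then show ?thesis using True by simp
next
  case False
  then have "0 < a" using assms(1) by simp
  have "0 \<le> a * (- b / (2 * a))\<^sup>2 + b * (- b / (2 * a)) + c" by (rule nonneg)
  also have "\<dots> = (4 * a * c - b\<^sup>2) / (4 * a)"
    using \<open>0 < a\<close> by (simp add: field_simps power2_eq_square)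
  finally show ?thesis using \<open>0 < a\<close> by (simp add: zero_le_divide_iff)
qed

lemma density_matrix_hermitian: "density_matrix \<rho> \<Longrightarrow> \<rho> l k = cnj (\<rho> k l)"
  unfolding density_matrix_def by blast

lemma density_matrix_psd:
  "density_matrix \<rho> \<Longrightarrow> finite S \<Longrightarrow> 0 \<le> Re (\<Sum>k\<in>S. \<Sum>l\<in>S. cnj (x k) * \<rho> k l * x l)"
  unfolding density_matrix_def by blast

lemma density_matrix_diag_nonneg:
  assumes "density_matrix \<rho>"
  shows "0 \<le> Re (\<rho> k k)"
  using density_matrix_psd[OF assms, of "{k}" "\<lambda>_. 1"] by simp

lemma density_matrix_diag_has_sum:
  assumes "density_matrix \<rho>"
  shows "((\<lambda>k. Re (\<rho> k k)) has_sum 1) UNIV"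
proof -
  have "((\<lambda>k. \<rho> k k) has_sum 1) UNIV"
    using assms unfolding density_matrix_def by blast
  from has_sum_Re[OF this] show ?thesis by simp
qed

lemma density_matrix_offdiag_le:
  assumes \<rho>: "density_matrix \<rho>"
  shows "(cmod (\<rho> k l))\<^sup>2 \<le> Re (\<rho> k k) * Re (\<rho> l l)"
proof (cases "k = l")
  case True
  have "Im (\<rho> k k) = 0"
    using arg_cong[OF density_matrix_hermitian[OF \<rho>, of k k], of Im] by simp
  then show ?thesis using True by (simp add: cmod_power2 flip: power2_eq_square)
next
  case False
  define c where "c = (cmod (\<rho> k l))\<^sup>2"
  \<comment> \<open>Positivity of the form on the vector \<open>x = -s \<rho>\<^sub>k\<^sub>l e\<^sub>k + e\<^sub>l\<close> gives a quadratic in \<open>s\<close>.\<close>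
  have "0 \<le> (c * Re (\<rho> k k)) * s\<^sup>2 + (- 2 * c) * s + Re (\<rho> l l)" for s
  proof -
    define x where "x = (\<lambda>j. if j = k then - of_real s * \<rho> k l else 1)"
    have "0 \<le> Re (\<Sum>i\<in>{k,l}. \<Sum>j\<in>{k,l}. cnj (x i) * \<rho> i j * x j)"
      by (rule density_matrix_psd[OF \<rho>]) simp
    also have "\<dots> = (c * Re (\<rho> k k)) * s\<^sup>2 + (- 2 * c) * s + Re (\<rho> l l)"
      using False density_matrix_hermitian[OF \<rho>, of l k]
      by (simp add: x_def c_def power2_eq_square cmod_def algebra_simps)
    finally show ?thesis .
  qed
  then have "(- 2 * c)\<^sup>2 \<le> 4 * (c * Re (\<rho> k k)) * Re (\<rho> l l)"
    by (intro quadratic_nonneg_imp_discriminant_le)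
       (simp_all add: c_def density_matrix_diag_nonneg[OF \<rho>])
  then have "c * c \<le> c * (Re (\<rho> k k) * Re (\<rho> l l))"
    by (simp add: power2_eq_square algebra_simps)
  moreover have "0 \<le> Re (\<rho> k k) * Re (\<rho> l l)"
    using density_matrix_diag_nonneg[OF \<rho>] by simp
  ultimately show ?thesis
    unfolding c_def by (metis mult_le_cancel_left_pos order_le_less zero_le_power2)
qed

lemma unitary_matrix_row_has_sum:
  assumes "unitary_matrix U"
  shows "((\<lambda>k. (cmod (U j k))\<^sup>2) has_sum 1) UNIV"
proof -
  have "((\<lambda>k. U j k * cnj (U j k)) has_sum 1) UNIV"
    using assms unfolding unitary_matrix_def by (metis (full_types))
  from has_sum_Re[OF this] show ?thesis
    by (simp flip: complex_norm_square)
qed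

lemma unitary_matrix_entry_le_1:
  assumes "unitary_matrix U"
  shows "(cmod (U j k))\<^sup>2 \<le> 1"
  using has_sum_mono'[OF has_sum_finite[of "{k}"] unitary_matrix_row_has_sum[OF assms]] by simp

definition mu_summand :: "('a \<Rightarrow> 'a \<Rightarrow> complex) \<Rightarrow> ('a \<Rightarrow> 'a \<Rightarrow> complex) \<Rightarrow> 'a \<Rightarrow> 'a \<Rightarrow> real" where
  "mu_summand U \<rho> n k = (cmod (U n k))\<^sup>2 * Re (\<rho> k k)"

lemma mu_summand_nonneg: "density_matrix \<rho> \<Longrightarrow> 0 \<le> mu_summand U \<rho> n k"
  by (simp add: mu_summand_def density_matrix_diag_nonneg)

lemma has_sum_mu:
  assumes \<rho>: "density_matrix \<rho>" and U: "unitary_matrix U"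
  shows "(mu_summand U \<rho> n has_sum mu U \<rho> n) UNIV"
proof -
  have "mu_summand U \<rho> n summable_on UNIV"
  proof (rule summable_on_comparison_test)
    show "(\<lambda>k. Re (\<rho> k k)) summable_on UNIV"
      using density_matrix_diag_has_sum[OF \<rho>] by (rule has_sum_imp_summable)
    show "mu_summand U \<rho> n k \<le> Re (\<rho> k k)" for k
      using unitary_matrix_entry_le_1[OF U, of n k] density_matrix_diag_nonneg[OF \<rho>, of k]
      by (simp add: mu_summand_def mult_left_le_one_le)
  qed (rule mu_summand_nonneg[OF \<rho>])
  then show ?thesis
    by (simp add: mu_def mu_summand_def[abs_def])
qed

definition nu_majorant :: "('a \<Rightarrow> 'a \<Rightarrow> complex) \<Rightarrow> ('a \<Rightarrow> 'a \<Rightarrow> complex) \<Rightarrow> 'a \<Rightarrow> 'a \<Rightarrow> 'a \<times> 'a \<Rightarrow> real"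
  where "nu_majorant U \<rho> m n p = (case p of (k, l) \<Rightarrow>
    (mu_summand U \<rho> m k * mu_summand U \<rho> n l + mu_summand U \<rho> n k * mu_summand U \<rho> m l) / 2)"

lemma norm_nu_term_le:
  assumes \<rho>: "density_matrix \<rho>"
  shows "norm (nu_term U \<rho> m n (k, l)) \<le> nu_majorant U \<rho> m n (k, l)"
proof -
  define a b d e where "a = cmod (U m k)" "b = cmod (U m l)" "d = cmod (U n k)" "e = cmod (U n l)"
  have nonneg: "0 \<le> a" "0 \<le> b" "0 \<le> d" "0 \<le> e" "0 \<le> Re (\<rho> k k)" "0 \<le> Re (\<rho> l l)"
    using density_matrix_diag_nonneg[OF \<rho>] by (simp_all add: a_b_d_e_def)
  have "norm (nu_term U \<rho> m n (k, l)) = (a * e) * (d * b) * (cmod (\<rho> k l))\<^sup>2"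
    by (simp add: nu_term_def a_b_d_e_def norm_mult norm_power)
  also have "\<dots> \<le> (a * e) * (d * b) * (Re (\<rho> k k) * Re (\<rho> l l))"
    using nonneg density_matrix_offdiag_le[OF \<rho>] by (intro mult_left_mono) simp_all
  also have "\<dots> \<le> ((a * e)\<^sup>2 + (d * b)\<^sup>2) / 2 * (Re (\<rho> k k) * Re (\<rho> l l))"
    using nonneg sum_squares_bound[of "a * e" "d * b"] by (intro mult_right_mono) simp_all
  also have "\<dots> = nu_majorant U \<rho> m n (k, l)"
    by (simp add: nu_majorant_def mu_summand_def a_b_d_e_def algebra_simps)
  finally show ?thesis .
qed

lemma has_sum_nu_majorant:
  assumes \<rho>: "density_matrix \<rho>" and U: "unitary_matrix U"
  shows "(nu_majorant U \<rho> m n has_sum mu U \<rho> m * mu U \<rho> n) UNIV"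
proof -
  have prod: "((\<lambda>(k, l). mu_summand U \<rho> i k * mu_summand U \<rho> j l) has_sum mu U \<rho> i * mu U \<rho> j) UNIV"
    for i j
    using has_sum_product_nonneg[OF mu_summand_nonneg[OF \<rho>] mu_summand_nonneg[OF \<rho>]
        has_sum_mu[OF \<rho> U] has_sum_mu[OF \<rho> U]] by simp
  have "mu U \<rho> m * mu U \<rho> n = (mu U \<rho> m * mu U \<rho> n + mu U \<rho> n * mu U \<rho> m) / 2"
    by simp
  then show ?thesis
    using has_sum_divide_const[OF has_sum_add[OF prod[of m n] prod[of n m]], where c = 2]
    by (simp add: nu_majorant_def[abs_def] case_prod_unfold)
qed

lemma nu_term_summable:
  assumes \<rho>: "density_matrix \<rho>" and U: "unitary_matrix U"
  shows "nu_term U \<rho> m n summable_on UNIV"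
proof -
  have "(\<lambda>p. norm (nu_term U \<rho> m n p)) summable_on UNIV"
    using has_sum_imp_summable[OF has_sum_nu_majorant[OF \<rho> U]]
  proof (rule summable_on_comparison_test)
    show "norm (nu_term U \<rho> m n p) \<le> nu_majorant U \<rho> m n p" for p
      using norm_nu_term_le[OF \<rho>] by (cases p) simp
  qed simp
  then show ?thesis
    by (rule abs_summable_summable)
qed

lemma norm_nu_tilde_le:
  assumes \<rho>: "density_matrix \<rho>" and U: "unitary_matrix U"
  shows "norm (nu_tilde U \<rho> m n) \<le> mu U \<rho> m * mu U \<rho> n"
  unfolding nu_tilde_def
  using has_sum_infsum[OF nu_term_summable[OF \<rho> U]] has_sum_nu_majorant[OF \<rho> U]
proof (rule norm_infsum_le)
  show "norm (nu_term U \<rho> m n p) \<le> nu_majorant U \<rho> m n p" for p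
    using norm_nu_term_le[OF \<rho>] by (cases p) simp
qed

lemma nu_term_swap:
  assumes "density_matrix \<rho>"
  shows "nu_term U \<rho> m n (l, k) = cnj (nu_term U \<rho> m n (k, l))"
  using density_matrix_hermitian[OF assms, of k l] by (simp add: nu_term_def ac_simps)

lemma Im_infsum_nu_term_eq_0:
  assumes "density_matrix \<rho>" and "\<And>k l. (k, l) \<in> A \<Longrightarrow> (l, k) \<in> A"
  shows "Im (infsum (nu_term U \<rho> m n) A) = 0"
  using nu_term_swap[OF assms(1)] assms(2) by (rule Im_infsum_eq_0_if_swap_cnj)

lemma Re_nu_term_diag_nonneg: "0 \<le> Re (nu_term U \<rho> m n (k, k))"
proof -
  have "nu_term U \<rho> m n (k, k)
      = (U m k * cnj (U m k)) * (U n k * cnj (U n k)) * of_real ((cmod (\<rho> k k))\<^sup>2)"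
    unfolding nu_term_def by (simp add: ac_simps)
  also have "\<dots> = of_real ((cmod (U m k))\<^sup>2 * (cmod (U n k))\<^sup>2 * (cmod (\<rho> k k))\<^sup>2)"
    by (simp only: complex_norm_square[symmetric] of_real_mult)
  finally show ?thesis by simp
qed

lemma Re_nu_le_Re_nu_tilde:
  assumes \<rho>: "density_matrix \<rho>" and U: "unitary_matrix U"
  shows "Re (nu U \<rho> m n) \<le> Re (nu_tilde U \<rho> m n)"
proof -
  let ?t = "nu_term U \<rho> m n" and ?off = "{(k, l). k \<noteq> l}" and ?diag = "{(k, l). k = l}"
  have summable: "?t summable_on A" for A
    using nu_term_summable[OF \<rho> U] by (rule summable_on_subset_banach) simp
  have "nu_tilde U \<rho> m n = infsum ?t (?off \<union> ?diag)"
    unfolding nu_tilde_def by (rule arg_cong[where f = "infsum ?t"]) auto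
  also have "\<dots> = nu U \<rho> m n + infsum ?t ?diag"
    unfolding nu_def by (rule infsum_Un_disjoint) (auto intro: summable)
  finally have "Re (nu_tilde U \<rho> m n) = Re (nu U \<rho> m n) + infsum (\<lambda>p. Re (?t p)) ?diag"
    by (simp add: infsum_Re summable)
  moreover have "0 \<le> infsum (\<lambda>p. Re (?t p)) ?diag"
    by (rule infsum_nonneg) (auto simp: Re_nu_term_diag_nonneg)
  ultimately show ?thesis
    by simp
qed

theorem lemma2:
  fixes \<rho> U :: "'a::countable \<Rightarrow> 'a \<Rightarrow> complex" and m n :: 'a
  assumes "density_matrix \<rho>" and "unitary_matrix U"
  shows "Im (nu U \<rho> m n) = 0 \<and> Im (nu_tilde U \<rho> m n) = 0 \<and>
         Re (nu U \<rho> m n) \<le> Re (nu_tilde U \<rho> m n) \<and>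
         Re (nu_tilde U \<rho> m n) \<le> mu U \<rho> m * mu U \<rho> n"
proof (intro conjI)
  show "Im (nu U \<rho> m n) = 0"
    unfolding nu_def using assms(1) by (rule Im_infsum_nu_term_eq_0) auto
  show "Im (nu_tilde U \<rho> m n) = 0"
    unfolding nu_tilde_def using assms(1) by (rule Im_infsum_nu_term_eq_0) auto
  show "Re (nu U \<rho> m n) \<le> Re (nu_tilde U \<rho> m n)"
    using assms by (rule Re_nu_le_Re_nu_tilde)
  show "Re (nu_tilde U \<rho> m n) \<le> mu U \<rho> m * mu U \<rho> n"
    using complex_Re_le_cmod norm_nu_tilde_le[OF assms] by (rule order_trans)
qed

end
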